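(* Let $a,b,\alpha_1,\beta_1,\alpha_2,\beta_2\in\mathbb C$ and let $p,k\ge0$ be integers. Let $\mathbf F(x,y)=\prod_{j=0}^{p-1}(\alpha_1x+j-y+\beta_1)(\alpha_2x+j-y+\beta_2)$. Then the coefficient of $x^{2p}$ in the polynomial $\widetilde{\mathcal T}_k^{a,b}[(\mathbf F(x,i))_{i}]$ does not depend on $\beta_1,\beta_2$, and equals $$\sum_{j=0}^k\frac{k!}{(k-j)!}\sum_{i=0}^{p}\binom{p}{i}\binom{p}{2p-j-i}\alpha_1^i\alpha_2^{2p-i-j}\prod_{r=0}^{k-j-1}(a-b+j+r).$$
   Context: For integers $0\le i\le k$, $P_i^k(x;a,b):=\prod_{j=0}^{k-i-1}(x+j+a)\prod_{j=0}^{i-1}(x-j+b)$. For a sequence of polynomials $(a_i(x))_{i\ge0}$, $\widetilde{\mathcal T}_k^{a,b}[(a_i(x))_i]:=(-1)^k\sum_{i=0}^k(-1)^{k-i}\binom{k}{i}P_i^k(x;a,b)\,a_i(x)$. Binomial coefficients $\binom{p}{m}$ are $0$ for $m<0$ or $m>p$. *)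

theory Defs
  imports Complex_Main "HOL-Computational_Algebra.Polynomial"
begin

definition P_poly :: "nat \<Rightarrow> nat \<Rightarrow> complex \<Rightarrow> complex \<Rightarrow> complex poly" where
  "P_poly i k a b = (\<Prod>j<k-i. [: of_nat j + a, 1 :]) * (\<Prod>j<i. [: b - of_nat j, 1 :])"

definition T_tilde :: "nat \<Rightarrow> complex \<Rightarrow> complex \<Rightarrow> (nat \<Rightarrow> complex poly) \<Rightarrow> complex poly" where
  "T_tilde k a b A = smult ((-1) ^ k)
     (\<Sum>i=0..k. smult ((-1) ^ (k - i) * of_nat (k choose i)) (P_poly i k a b * A i))"

definition F_poly :: "complex \<Rightarrow> complex \<Rightarrow> complex \<Rightarrow> complex \<Rightarrow> nat \<Rightarrow> complex \<Rightarrow> complex poly" where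
  "F_poly \<alpha>1 \<beta>1 \<alpha>2 \<beta>2 p y =
     (\<Prod>j<p. [: of_nat j - y + \<beta>1, \<alpha>1 :] * [: of_nat j - y + \<beta>2, \<alpha>2 :])"

end

theory Submission
  imports Defs
begin

text \<open>
  Expand F(x, i) in the binomial basis (i choose t): the coefficient g_t(x) has degree at most
  2p - t, and its coefficient of x^(2p-t) is determined by the leading form
  (\<alpha>1 x - i)^p (\<alpha>2 x - i)^p of F, so it does not involve \<beta>1, \<beta>2. By the Vandermonde
  identity for rising factorials, the operator T_k sends (i choose t) g to a constant times a
  monic polynomial of degree t times g; hence the coefficient of x^(2p) sees only these top
  coefficients.
\<close>

lemma of_nat_diff_times_binomial:
  "(of_nat n - of_nat k) * of_nat (n choose k) = (of_nat (Suc k) * of_nat (n choose Suc k) :: 'a::comm_ring_1)"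
proof (cases "k \<le> n")
  case True
  then show ?thesis
    by (metis binomial_absorb_comp binomial_absorption of_nat_diff of_nat_mult)
next
  case False
  then show ?thesis
    by (simp add: binomial_eq_0)
qed

lemma sum_binomial_mult_binomial_pochhammer:
  fixes u v :: "'a::comm_ring_1"
  shows "(\<Sum>i\<le>k. of_nat (k choose i) * of_nat (i choose m) * pochhammer u (k - i) * pochhammer v i) =
    of_nat (k choose m) * pochhammer v m * pochhammer (u + v + of_nat m) (k - m)"
proof (cases "m \<le> k")
  case True
  define n where "n = k - m"
  have k: "k = n + m"
    using True by (simp add: n_def)
  have "(\<Sum>i\<le>k. of_nat (k choose i) * of_nat (i choose m) * pochhammer u (k - i) * pochhammer v i) =
      (\<Sum>i=0+m..n+m. of_nat (k choose i) * of_nat (i choose m) * pochhammer u (k - i) * pochhammer v i)"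
    by (rule sum.mono_neutral_right) (auto simp: k not_le binomial_eq_0)
  also have "\<dots> = (\<Sum>s=0..n. of_nat (k choose m) * pochhammer v m *
      (of_nat (n choose s) * pochhammer (v + of_nat m) s * pochhammer u (n - s)))"
  proof (rule trans[OF sum.shift_bounds_cl_nat_ivl sum.cong])
    fix s assume "s \<in> {0..n}"
    then have "(k choose (s + m)) * ((s + m) choose m) = (k choose m) * (n choose s)"
      using choose_mult[of m "s + m" k] by (simp add: k)
    then have "of_nat (k choose (s + m)) * of_nat ((s + m) choose m) = (of_nat (k choose m) * of_nat (n choose s) :: 'a)"
      by (metis of_nat_mult)
    moreover have "pochhammer v (s + m) = pochhammer v m * pochhammer (v + of_nat m) s"
      by (simp only: add.commute[of s] pochhammer_product')
    moreover have "k - (s + m) = n - s"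
      by (simp add: k)
    ultimately show "of_nat (k choose (s + m)) * of_nat ((s + m) choose m) * pochhammer u (k - (s + m)) * pochhammer v (s + m) =
        of_nat (k choose m) * pochhammer v m * (of_nat (n choose s) * pochhammer (v + of_nat m) s * pochhammer u (n - s))"
      by (simp add: algebra_simps)
  qed simp
  also have "\<dots> = of_nat (k choose m) * pochhammer v m * pochhammer (v + of_nat m + u) n"
    by (simp add: pochhammer_binomial_sum atLeast0AtMost sum_distrib_left)
  finally show ?thesis
    by (simp add: n_def algebra_simps)
next
  case False
  then show ?thesis
    by (simp add: binomial_eq_0)
qed

lemma smult_sum_right: "smult c (\<Sum>i\<in>S. f i) = (\<Sum>i\<in>S. smult c (f i))"
  by (induction S rule: infinite_finite_induct) (simp_all add: smult_add_right)

lemma coeff_linear_mult_Suc: "coeff ([:u, v:] * q) (Suc m) = u * coeff q (Suc m) + v * coeff q m"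
  by simp

lemma coeff_mult_degree_le:
  fixes p q :: "'a::comm_semiring_0 poly"
  assumes "degree p \<le> m" "degree q \<le> d"
  shows "coeff (p * q) (m + d) = coeff p m * coeff q d"
proof -
  have "coeff p i * coeff q (m + d - i) = 0" if "i \<in> {..m + d} - {m}" for i
    using that assms by (cases "i < m") (simp_all add: coeff_eq_0)
  then have "(\<Sum>i\<le>m + d. coeff p i * coeff q (m + d - i)) = (\<Sum>i\<in>{m}. coeff p i * coeff q (m + d - i))"
    by (intro sum.mono_neutral_right) auto
  then show ?thesis
    by (simp add: coeff_mult)
qed

lemma coeff_linear_power_mult_linear_power:
  "coeff ([:1, \<alpha>1:] ^ p * [:1, \<alpha>2:] ^ p) m =
     (\<Sum>i=0..p. if i \<le> m then of_nat (p choose i) * of_nat (p choose (m - i)) * \<alpha>1 ^ i * \<alpha>2 ^ (m - i) else 0)"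
  for \<alpha>1 \<alpha>2 :: "'a::comm_semiring_1"
proof -
  have power: "coeff ([:1, \<alpha>:] ^ p) i = of_nat (p choose i) * \<alpha> ^ i" for \<alpha> :: 'a and i
  proof (cases "i \<le> p")
    case False
    have "degree ([:1, \<alpha>:] ^ p) \<le> degree [:1, \<alpha>:] * p"
      by (rule degree_power_le)
    also have "\<dots> \<le> p"
      by simp
    finally show ?thesis
      using False by (simp add: coeff_eq_0 binomial_eq_0)
  qed (simp add: coeff_linear_poly_power)
  have "coeff ([:1, \<alpha>1:] ^ p * [:1, \<alpha>2:] ^ p) m =
      (\<Sum>i\<le>m. of_nat (p choose i) * of_nat (p choose (m - i)) * \<alpha>1 ^ i * \<alpha>2 ^ (m - i))"
    by (simp add: coeff_mult power mult_ac)
  also have "\<dots> = (\<Sum>i\<in>{0..p} \<inter> {..m}.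
      of_nat (p choose i) * of_nat (p choose (m - i)) * \<alpha>1 ^ i * \<alpha>2 ^ (m - i))"
    by (rule sum.mono_neutral_right) (auto simp: binomial_eq_0)
  finally show ?thesis
    by (simp only: sum.inter_restrict[OF finite_atLeastAtMost] atMost_iff)
qed

text \<open>
  Read \<open>G i\<close> as a polynomial in \<open>x\<close> and \<open>i\<close> of total degree at most \<open>n\<close>, expanded in the
  basis \<open>i choose t\<close> with coefficients \<open>g t\<close>. The polynomial \<open>H\<close> is its dehomogenised leading
  form: the degree-\<open>n\<close> part of \<open>G i\<close> is \<open>\<Sum>m. coeff H m * x ^ m * (- i) ^ (n - m)\<close>, and
  since \<open>i choose t \<sim> i ^ t / t!\<close> this is what the top coefficients of the \<open>g t\<close> record.
\<close>
definition has_newton_expansion :: "nat \<Rightarrow> 'a::comm_ring_1 poly \<Rightarrow> (nat \<Rightarrow> 'a poly) \<Rightarrow> bool" where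
  "has_newton_expansion n H G \<longleftrightarrow> (\<exists>g.
     (\<forall>i. G i = (\<Sum>t\<le>n. smult (of_nat (i choose t)) (g t))) \<and>
     (\<forall>t>n. g t = 0) \<and> (\<forall>t. degree (g t) \<le> n - t) \<and> degree H \<le> n \<and>
     (\<forall>t\<le>n. coeff (g t) (n - t) = of_nat (fact t) * (-1) ^ t * coeff H (n - t)))"

lemma has_newton_expansion_one: "has_newton_expansion 0 1 (\<lambda>i. 1)"
  unfolding has_newton_expansion_def
  by (rule exI[of _ "\<lambda>t. if t = 0 then 1 else 0"]) simp

definition newton_mult_linear :: "'a::comm_ring_1 \<Rightarrow> 'a \<Rightarrow> (nat \<Rightarrow> 'a poly) \<Rightarrow> nat \<Rightarrow> 'a poly" where
  "newton_mult_linear c \<alpha> g t = [:c - of_nat t, \<alpha>:] * g t - smult (of_nat t) (g (t - 1))"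

lemma newton_sum_mult_linear:
  fixes g :: "nat \<Rightarrow> 'a::comm_ring_1 poly"
  assumes "\<forall>t>n. g t = 0"
  shows "(\<Sum>t\<le>n. smult (of_nat (i choose t)) (g t)) * [:c - of_nat i, \<alpha>:] =
    (\<Sum>t\<le>Suc n. smult (of_nat (i choose t)) (newton_mult_linear c \<alpha> g t))"
proof -
  have termwise: "smult (of_nat (i choose t)) (g t * [:c - of_nat i, \<alpha>:]) =
      smult (of_nat (i choose t)) ([:c - of_nat t, \<alpha>:] * g t)
      - smult (of_nat (Suc t) * of_nat (i choose Suc t)) (g t)" for t
  proof -
    have "[:c - of_nat i, \<alpha>:] = [:c - of_nat t, \<alpha>:] - [:of_nat i - of_nat t:]"
      by simp
    then have "g t * [:c - of_nat i, \<alpha>:] = [:c - of_nat t, \<alpha>:] * g t - smult (of_nat i - of_nat t) (g t)"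
      by (simp add: algebra_simps flip: smult_add_left)
    then have "smult (of_nat (i choose t)) (g t * [:c - of_nat i, \<alpha>:]) =
        smult (of_nat (i choose t)) ([:c - of_nat t, \<alpha>:] * g t)
        - smult ((of_nat i - of_nat t) * of_nat (i choose t)) (g t)"
      by (simp only: smult_diff_right smult_smult mult.commute)
    then show ?thesis
      by (simp only: of_nat_diff_times_binomial)
  qed
  have "(\<Sum>t\<le>n. smult (of_nat (i choose t)) (g t)) * [:c - of_nat i, \<alpha>:] =
      (\<Sum>t\<le>n. smult (of_nat (i choose t)) ([:c - of_nat t, \<alpha>:] * g t))
      - (\<Sum>t\<le>n. smult (of_nat (Suc t) * of_nat (i choose Suc t)) (g t))"
    by (simp only: sum_distrib_right mult_smult_left termwise sum_subtractf)
  also have "(\<Sum>t\<le>n. smult (of_nat (i choose t)) ([:c - of_nat t, \<alpha>:] * g t))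
      = (\<Sum>t\<le>Suc n. smult (of_nat (i choose t)) ([:c - of_nat t, \<alpha>:] * g t))"
    using assms by simp
  also have "(\<Sum>t\<le>n. smult (of_nat (Suc t) * of_nat (i choose Suc t)) (g t))
      = (\<Sum>t\<le>Suc n. smult (of_nat (i choose t)) (smult (of_nat t) (g (t - 1))))"
    by (simp add: sum.atMost_Suc_shift mult.commute del: sum.atMost_Suc)
  finally show ?thesis
    by (simp add: newton_mult_linear_def smult_diff_right sum_subtractf)
qed

lemma degree_newton_mult_linear:
  assumes supp: "\<forall>t>n. g t = 0" and deg: "\<forall>t. degree (g t) \<le> n - t"
  shows "degree (newton_mult_linear c \<alpha> g t) \<le> Suc n - t"
proof -
  have "degree ([:c - of_nat t, \<alpha>:] * g t) \<le> Suc n - t"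
  proof (cases "t \<le> n")
    case True
    have "degree ([:c - of_nat t, \<alpha>:] * g t) \<le> 1 + degree (g t)"
      by (rule order.trans[OF degree_mult_le]) simp
    then show ?thesis
      using True deg[rule_format, of t] by linarith
  qed (simp add: supp)
  moreover have "degree (smult (of_nat t) (g (t - 1))) \<le> Suc n - t"
    using deg[rule_format, of "t - 1"] degree_smult_le[of "of_nat t" "g (t - 1)"] by (cases t) auto
  ultimately show ?thesis
    unfolding newton_mult_linear_def by (rule degree_diff_le)
qed

lemma coeff_newton_mult_linear:
  fixes H :: "'a::comm_ring_1 poly"
  assumes supp: "\<forall>t>n. g t = 0" and deg: "\<forall>t. degree (g t) \<le> n - t" and degH: "degree H \<le> n"
    and top: "\<forall>t\<le>n. coeff (g t) (n - t) = of_nat (fact t) * (-1) ^ t * coeff H (n - t)"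
    and t: "t \<le> Suc n"
  shows "coeff (newton_mult_linear c \<alpha> g t) (Suc n - t) =
    of_nat (fact t) * (-1) ^ t * coeff (H * [:1, \<alpha>:]) (Suc n - t)"
proof (cases t)
  case 0
  have "coeff (g 0) (Suc n) = 0" "coeff H (Suc n) = 0"
    using deg[rule_format, of 0] degH by (simp_all add: coeff_eq_0)
  then show ?thesis
    using top[rule_format, of 0] by (simp add: newton_mult_linear_def 0 coeff_linear_mult_Suc mult.commute)
next
  case (Suc s)
  have prev: "coeff (g s) (Suc n - t) = of_nat (fact s) * (-1) ^ s * coeff H (Suc n - t)"
    using top t Suc by simp
  have cur: "coeff ([:c - of_nat t, \<alpha>:] * g t) (Suc n - t)
      = \<alpha> * (if t \<le> n then of_nat (fact t) * (-1) ^ t * coeff H (n - t) else 0)"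
  proof (cases "t \<le> n")
    case True
    then have "Suc n - t = Suc (n - t)" by simp
    moreover have "coeff (g t) (Suc (n - t)) = 0"
      using deg[rule_format, of t] by (simp add: coeff_eq_0)
    ultimately show ?thesis
      using top True by (simp only: coeff_linear_mult_Suc) simp
  qed (simp add: supp)
  have "coeff (H * [:1, \<alpha>:]) (Suc n - t)
      = coeff H (Suc n - t) + \<alpha> * (if t \<le> n then coeff H (n - t) else 0)"
  proof (cases "t \<le> n")
    case True
    then have "Suc n - t = Suc (n - t)" by simp
    then show ?thesis
      using True coeff_linear_mult_Suc[of 1 \<alpha> H "n - t"] by (simp add: mult.commute)
  next
    case False
    then have "Suc n - t = 0" using t by simp
    then show ?thesis using False by simp
  qed
  then show ?thesis
    using prev cur Suc by (simp add: newton_mult_linear_def algebra_simps)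
qed

lemma has_newton_expansion_mult_linear:
  fixes H :: "'a::comm_ring_1 poly"
  assumes "has_newton_expansion n H G"
  shows "has_newton_expansion (Suc n) (H * [:1, \<alpha>:]) (\<lambda>i. G i * [:c - of_nat i, \<alpha>:])"
proof -
  obtain g where G: "\<forall>i. G i = (\<Sum>t\<le>n. smult (of_nat (i choose t)) (g t))"
    and supp: "\<forall>t>n. g t = 0" and deg: "\<forall>t. degree (g t) \<le> n - t" and degH: "degree H \<le> n"
    and top: "\<forall>t\<le>n. coeff (g t) (n - t) = of_nat (fact t) * (-1) ^ t * coeff H (n - t)"
    using assms unfolding has_newton_expansion_def by blast
  have "degree (H * [:1, \<alpha>:]) \<le> degree H + degree [:1, \<alpha>:]"
    by (rule degree_mult_le)
  also have "\<dots> \<le> Suc n"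
    using degH by simp
  finally have "degree (H * [:1, \<alpha>:]) \<le> Suc n" .
  moreover have "\<forall>t>Suc n. newton_mult_linear c \<alpha> g t = 0"
    using supp by (simp add: newton_mult_linear_def)
  ultimately show ?thesis
    unfolding has_newton_expansion_def
    using newton_sum_mult_linear[OF supp] degree_newton_mult_linear[OF supp deg]
      coeff_newton_mult_linear[OF supp deg degH top]
    by (intro exI[of _ "newton_mult_linear c \<alpha> g"]) (simp add: G)
qed

lemma poly_P_poly:
  "poly (P_poly i k a b) x = (-1) ^ i * pochhammer (x + a) (k - i) * pochhammer (- x - b) i"
proof -
  have rising: "(\<Prod>j<n. of_nat j + a + x) = pochhammer (x + a) n" for n
    by (induction n) (simp_all add: lessThan_Suc pochhammer_Suc algebra_simps)
  have falling: "(\<Prod>j<n. b - of_nat j + x) = (-1) ^ n * pochhammer (- x - b) n" for n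
    by (induction n) (simp_all add: lessThan_Suc pochhammer_Suc algebra_simps)
  show ?thesis
    by (simp add: P_poly_def poly_prod rising falling)
qed

lemma poly_T_tilde:
  "poly (T_tilde k a b A) x =
     (\<Sum>i\<le>k. of_nat (k choose i) * pochhammer (x + a) (k - i) * pochhammer (- x - b) i * poly (A i) x)"
proof -
  have "poly (T_tilde k a b A) x =
      (\<Sum>i\<le>k. (-1) ^ k * ((-1) ^ (k - i) * of_nat (k choose i) * (poly (P_poly i k a b) x * poly (A i) x)))"
    by (simp add: T_tilde_def poly_sum sum_distrib_left atLeast0AtMost)
  also have "\<dots> = (\<Sum>i\<le>k. of_nat (k choose i) * pochhammer (x + a) (k - i) * pochhammer (- x - b) i * poly (A i) x)"
  proof (rule sum.cong)
    fix i assume "i \<in> {..k}"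
    then have "(-1) ^ k * (-1) ^ (k - i) * (-1) ^ i = (1::complex)"
      by (simp flip: power_add)
    then show "(-1) ^ k * ((-1) ^ (k - i) * of_nat (k choose i) * (poly (P_poly i k a b) x * poly (A i) x)) =
        of_nat (k choose i) * pochhammer (x + a) (k - i) * pochhammer (- x - b) i * poly (A i) x"
      by (simp add: poly_P_poly mult_ac)
  qed simp
  finally show ?thesis .
qed

lemma T_tilde_sum:
  "finite S \<Longrightarrow> T_tilde k a b (\<lambda>i. \<Sum>t\<in>S. A t i) = (\<Sum>t\<in>S. T_tilde k a b (A t))"
  by (simp add: T_tilde_def sum_distrib_left smult_sum_right sum.swap[of _ S])

lemma T_tilde_smult_binomial:
  "T_tilde k a b (\<lambda>i. smult (of_nat (i choose m)) g) =
     smult ((-1) ^ m * of_nat (k choose m) * pochhammer (a - b + of_nat m) (k - m))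
       ((\<Prod>j<m. [:b - of_nat j, 1:]) * g)"
proof -
  have falling: "poly (\<Prod>j<m. [:b - of_nat j, 1:]) x = (-1) ^ m * pochhammer (- x - b) m" for x
    using poly_P_poly[of m m "0" b x] by (simp add: P_poly_def)
  have "poly (T_tilde k a b (\<lambda>i. smult (of_nat (i choose m)) g)) x =
      poly (smult ((-1) ^ m * of_nat (k choose m) * pochhammer (a - b + of_nat m) (k - m))
        ((\<Prod>j<m. [:b - of_nat j, 1:]) * g)) x" for x
    using sum_binomial_mult_binomial_pochhammer[of k m "x + a" "- x - b", symmetric]
    by (simp add: poly_T_tilde falling sum_distrib_left algebra_simps)
  then show ?thesis
    by (simp add: poly_eq_poly_eq_iff[symmetric] fun_eq_iff)
qed

lemma coeff_T_tilde_newton_expansion: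
  assumes "has_newton_expansion n H G"
  shows "coeff (T_tilde k a b G) n =
    (\<Sum>t\<le>n. of_nat (k choose t) * fact t * pochhammer (a - b + of_nat t) (k - t) * coeff H (n - t))"
proof -
  obtain g where G: "G = (\<lambda>i. \<Sum>t\<le>n. smult (of_nat (i choose t)) (g t))"
    and deg: "\<forall>t. degree (g t) \<le> n - t"
    and top: "\<forall>t\<le>n. coeff (g t) (n - t) = of_nat (fact t) * (-1) ^ t * coeff H (n - t)"
    using assms unfolding has_newton_expansion_def by blast
  have top_product: "coeff ((\<Prod>j<t. [:b - of_nat j, 1:]) * g t) n = coeff (g t) (n - t)" if "t \<le> n" for t
  proof -
    have "degree (\<Prod>j<t. [:b - of_nat j, 1:]) = t"
      by (simp add: degree_prod_eq_sum_degree)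
    moreover have "lead_coeff (\<Prod>j<t. [:b - of_nat j, 1:]) = 1"
      by (simp add: lead_coeff_prod)
    ultimately show ?thesis
      using coeff_mult_degree_le[of _ t "g t" "n - t"] deg that by simp
  qed
  have "coeff (T_tilde k a b G) n = (\<Sum>t\<le>n. (-1) ^ t * of_nat (k choose t) *
      pochhammer (a - b + of_nat t) (k - t) * coeff ((\<Prod>j<t. [:b - of_nat j, 1:]) * g t) n)"
    by (simp add: G T_tilde_sum T_tilde_smult_binomial coeff_sum)
  also have "\<dots> = (\<Sum>t\<le>n. of_nat (k choose t) * fact t * pochhammer (a - b + of_nat t) (k - t) * coeff H (n - t))"
  proof (rule sum.cong)
    fix t assume "t \<in> {..n}"
    moreover have "(-1) ^ t * (-1) ^ t = (1::complex)"
      by (simp flip: power_add)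
    ultimately show "(-1) ^ t * of_nat (k choose t) * pochhammer (a - b + of_nat t) (k - t) *
        coeff ((\<Prod>j<t. [:b - of_nat j, 1:]) * g t) n =
      of_nat (k choose t) * fact t * pochhammer (a - b + of_nat t) (k - t) * coeff H (n - t)"
      using top top_product by (simp add: mult_ac)
  qed simp
  finally show ?thesis .
qed

lemma F_poly_Suc:
  "F_poly \<alpha>1 \<beta>1 \<alpha>2 \<beta>2 (Suc p) y =
     F_poly \<alpha>1 \<beta>1 \<alpha>2 \<beta>2 p y * [:of_nat p + \<beta>1 - y, \<alpha>1:] * [:of_nat p + \<beta>2 - y, \<alpha>2:]"
proof -
  have "of_nat p - y + \<beta> = of_nat p + \<beta> - y" for \<beta> :: complex
    by simp
  then show ?thesis
    by (simp only: F_poly_def prod.lessThan_Suc mult.assoc)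
qed

lemma has_newton_expansion_F_poly:
  "has_newton_expansion (2 * p) ([:1, \<alpha>1:] ^ p * [:1, \<alpha>2:] ^ p)
     (\<lambda>i. F_poly \<alpha>1 \<beta>1 \<alpha>2 \<beta>2 p (of_nat i))"
proof (induction p)
  case 0
  then show ?case
    using has_newton_expansion_one by (simp add: F_poly_def)
next
  case (Suc p)
  have "has_newton_expansion (Suc (Suc (2 * p))) ([:1, \<alpha>1:] ^ p * [:1, \<alpha>2:] ^ p * [:1, \<alpha>1:] * [:1, \<alpha>2:])
      (\<lambda>i. F_poly \<alpha>1 \<beta>1 \<alpha>2 \<beta>2 p (of_nat i) * [:of_nat p + \<beta>1 - of_nat i, \<alpha>1:]
             * [:of_nat p + \<beta>2 - of_nat i, \<alpha>2:])"
    by (intro has_newton_expansion_mult_linear Suc.IH)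
  moreover have "[:1, \<alpha>1:] ^ Suc p * [:1, \<alpha>2:] ^ Suc p = [:1, \<alpha>1:] ^ p * [:1, \<alpha>2:] ^ p * [:1, \<alpha>1:] * [:1, \<alpha>2:]"
    by (simp only: power_Suc mult_ac)
  ultimately show ?case
    by (simp only: F_poly_Suc mult_2 add_Suc_right add_Suc)
qed

lemma coeff_T_tilde_F_poly:
  "coeff (T_tilde k a b (\<lambda>i. F_poly \<alpha>1 \<beta>1 \<alpha>2 \<beta>2 p (of_nat i))) (2 * p) =
     (\<Sum>j=0..k. (fact k / fact (k - j)) *
        (\<Sum>i=0..p. (if i + j \<le> 2 * p then
            of_nat (p choose i) * of_nat (p choose (2 * p - j - i)) *
            \<alpha>1 ^ i * \<alpha>2 ^ (2 * p - i - j) * (\<Prod>r<k - j. a - b + of_nat j + of_nat r)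
          else 0)))" (is "_ = sum ?Z _")
  unfolding coeff_T_tilde_newton_expansion[OF has_newton_expansion_F_poly]
proof (rule sum.mono_neutral_cong)
  fix t assume t: "t \<in> {..2 * p} \<inter> {0..k}"
  then have "of_nat (k choose t) * fact t = (fact k / fact (k - t) :: complex)"
    by (simp add: binomial_fact field_simps)
  moreover have "pochhammer (a - b + of_nat t) (k - t) = (\<Prod>r<k - t. a - b + of_nat t + of_nat r)"
    by (simp add: pochhammer_prod atLeast0LessThan)
  moreover have "i \<le> 2 * p - t \<longleftrightarrow> i + t \<le> 2 * p" "2 * p - t - i = 2 * p - i - t" for i
    using t by auto
  ultimately show "of_nat (k choose t) * fact t * pochhammer (a - b + of_nat t) (k - t) *
      coeff ([:1, \<alpha>1:] ^ p * [:1, \<alpha>2:] ^ p) (2 * p - t) = ?Z t"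
    by (simp add: coeff_linear_power_mult_linear_power sum_distrib_left sum_distrib_right mult_ac
        if_distrib cong: if_cong)
qed (auto simp: binomial_eq_0)

theorem proposition6:
  fixes a b \<alpha>1 \<beta>1 \<alpha>2 \<beta>2 \<beta>1' \<beta>2' :: complex and p k :: nat
  shows "coeff (T_tilde k a b (\<lambda>i. F_poly \<alpha>1 \<beta>1 \<alpha>2 \<beta>2 p (of_nat i))) (2 * p)
           = coeff (T_tilde k a b (\<lambda>i. F_poly \<alpha>1 \<beta>1' \<alpha>2 \<beta>2' p (of_nat i))) (2 * p)
       \<and> coeff (T_tilde k a b (\<lambda>i. F_poly \<alpha>1 \<beta>1 \<alpha>2 \<beta>2 p (of_nat i))) (2 * p)
           = (\<Sum>j=0..k. (fact k / fact (k - j)) *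
               (\<Sum>i=0..p. (if i + j \<le> 2 * p then
                   of_nat (p choose i) * of_nat (p choose (2 * p - j - i)) *
                   \<alpha>1 ^ i * \<alpha>2 ^ (2 * p - i - j) *
                   (\<Prod>r<k - j. a - b + of_nat j + of_nat r)
                 else 0)))"
  by (simp only: coeff_T_tilde_F_poly simp_thms)

end
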